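(* There exists a constant $C_1>0$ such that $$\mathcal J(v)\ge C_1\|v\|_{W_2^1(\mathcal T)}^2\qquad\text{for all } v\in\mathcal W.$$
   Context: Tree setup. Let $\mathcal T$ be a compact rooted tree with edges $e_j=[v_{k_j},v_j]$, $j=1,\dots,m$. Here $k_1=0$, $k_j\in\{1,\dots,d\}$ for $j\ge2$, and iterating $k$ from any $j$ reaches $0$. The root is $v_0$, internal vertices are $v_1,\dots,v_d$, and boundary vertices are $v_{d+1},\dots,v_m$. Edge $e_j$ has length $T_j$ and is parametrized by $[0,T_j]$ from $v_{k_j}$ to $v_j$. Fix $\tau\ge0$ with $\tau<T_j$ for all $j$. Spaces. Set $W_2^1(\mathcal T_\tau):=W_2^1[-\tau,T_1]\oplus\bigoplus_{j\ge2}W_2^1[0,T_j]$ and $W_2^1(\mathcal T):=\bigoplus_jW_2^1[0,T_j]$. $\mathcal W$ is the subspace of $W_2^1(\mathcal T_\tau)$ of all real tuples $v$ satisfying: - $v_j(0)=v_{k_j}(T_{k_j})$ for $j\ge2$; - $v_j=0$ on $[T_j-\tau,T_j]$ for $j>d$; - $v_1=0$ on $[-\tau,0]$. It is regarded as a subspace of $W_2^1(\mathcal T)$ by restriction. Operators. Fix real $b_j,c_j$. Define $$\ell_jv(t)=v_j'(t)+b_jv_j(t)+c_jv_j(t-\tau),\qquad 0<t<T_j,$$ where for $j\ge2$ and $0<t<\tau$ the term $v_j(t-\tau)$ means $v_{k_j}(t-\tau+T_{k_j})$, and for $j=1$ it uses $v_1$ on $[-\tau,0]$. Set $$\mathcal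 J(v)=\sum_{j=1}^m\int_0^{T_j}(\ell_jv(t))^2\,dt.$$ *)

theory Defs
  imports "HOL-Analysis.Analysis"
begin

text \<open>Sobolev space W_2^1[a,b] in one dimension: f is (the absolutely continuous
  representative of) a W_2^1 function on [a,b] whose derivative is g, i.e.
  g is square integrable on [a,b] and f is the indefinite integral of g.\<close>
definition W21 :: "(real \<Rightarrow> real) \<Rightarrow> (real \<Rightarrow> real) \<Rightarrow> real \<Rightarrow> real \<Rightarrow> bool" where
  "W21 f g a b \<longleftrightarrow> a \<le> b \<and> g integrable_on {a..b} \<and> (\<lambda>x. (g x)\<^sup>2) integrable_on {a..b}
     \<and> (\<forall>x\<in>{a..b}. f x = f a + integral {a..x} g)"

text \<open>Rooted tree: edges 1..m, edge j = [v (k j), v j], internal vertices 1..d,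
  boundary vertices d+1..m, root 0.\<close>
definition rooted_tree :: "nat \<Rightarrow> nat \<Rightarrow> (nat \<Rightarrow> nat) \<Rightarrow> bool" where
  "rooted_tree m d k \<longleftrightarrow> 1 \<le> m \<and> d < m \<and> k 1 = 0
     \<and> (\<forall>j\<in>{2..m}. k j \<in> {1..d})
     \<and> (\<forall>j\<in>{1..m}. \<exists>n. (k ^^ n) j = 0)
     \<and> (\<forall>i\<in>{1..d}. \<exists>j\<in>{2..m}. k j = i)"

definition inW :: "nat \<Rightarrow> nat \<Rightarrow> (nat \<Rightarrow> nat) \<Rightarrow> (nat \<Rightarrow> real) \<Rightarrow> real
     \<Rightarrow> (nat \<Rightarrow> real \<Rightarrow> real) \<Rightarrow> (nat \<Rightarrow> real \<Rightarrow> real) \<Rightarrow> bool" where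
  "inW m d k T \<tau> v g \<longleftrightarrow>
     W21 (v 1) (g 1) (-\<tau>) (T 1)
     \<and> (\<forall>j\<in>{2..m}. W21 (v j) (g j) 0 (T j))
     \<and> (\<forall>j\<in>{2..m}. v j 0 = v (k j) (T (k j)))
     \<and> (\<forall>j\<in>{d+1..m}. \<forall>t\<in>{T j - \<tau>..T j}. v j t = 0)
     \<and> (\<forall>t\<in>{-\<tau>..0}. v 1 t = 0)"

definition delayed :: "(nat \<Rightarrow> nat) \<Rightarrow> (nat \<Rightarrow> real) \<Rightarrow> real
     \<Rightarrow> (nat \<Rightarrow> real \<Rightarrow> real) \<Rightarrow> nat \<Rightarrow> real \<Rightarrow> real" where
  "delayed k T \<tau> v j t =
     (if \<tau> \<le> t \<or> j = 1 then v j (t - \<tau>) else v (k j) (t - \<tau> + T (k j)))"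

definition ell :: "(nat \<Rightarrow> nat) \<Rightarrow> (nat \<Rightarrow> real) \<Rightarrow> real \<Rightarrow> (nat \<Rightarrow> real) \<Rightarrow> (nat \<Rightarrow> real)
     \<Rightarrow> (nat \<Rightarrow> real \<Rightarrow> real) \<Rightarrow> (nat \<Rightarrow> real \<Rightarrow> real) \<Rightarrow> nat \<Rightarrow> real \<Rightarrow> real" where
  "ell k T \<tau> b c v g j t = g j t + b j * v j t + c j * delayed k T \<tau> v j t"

definition JJ :: "nat \<Rightarrow> (nat \<Rightarrow> nat) \<Rightarrow> (nat \<Rightarrow> real) \<Rightarrow> real \<Rightarrow> (nat \<Rightarrow> real) \<Rightarrow> (nat \<Rightarrow> real)
     \<Rightarrow> (nat \<Rightarrow> real \<Rightarrow> real) \<Rightarrow> (nat \<Rightarrow> real \<Rightarrow> real) \<Rightarrow> real" where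
  "JJ m k T \<tau> b c v g = (\<Sum>j=1..m. integral {0..T j} (\<lambda>t. (ell k T \<tau> b c v g j t)\<^sup>2))"

definition W21T_norm2 :: "nat \<Rightarrow> (nat \<Rightarrow> real) \<Rightarrow> (nat \<Rightarrow> real \<Rightarrow> real) \<Rightarrow> (nat \<Rightarrow> real \<Rightarrow> real) \<Rightarrow> real" where
  "W21T_norm2 m T v g = (\<Sum>j=1..m. integral {0..T j} (\<lambda>t. (v j t)\<^sup>2 + (g j t)\<^sup>2))"

end

theory Submission
  imports Defs
begin

(* On each edge, v_j solves the delay equation v_j' + b_j v_j + c_j v_j(t - tau) = ell_j v with
   initial value and history supplied by the parent edge (zero on the root edge).  Gronwall's
   inequality together with Cauchy-Schwarz bounds sup |v_j| by the sup norm on the parent edge plus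
   a multiple of sqrt J(v); induction towards the root gives sup |v_j| <= K sqrt J(v) on every edge.
   Writing v_j' = ell_j v - b_j v_j - c_j v_j(t - tau) then bounds the W_2^1 norm by D J(v). *)

lemma integral_square_nonneg: "0 \<le> integral S (\<lambda>x. (f x)\<^sup>2 :: real)"
  by (cases "(\<lambda>x. (f x)\<^sup>2) integrable_on S")
     (auto intro: integral_nonneg simp: not_integrable_integral)

lemma integral_abs_le_sqrt_integral_square:
  fixes f :: "real \<Rightarrow> real"
  assumes f2: "(\<lambda>x. (f x)\<^sup>2) integrable_on {a..b}" and fa: "(\<lambda>x. \<bar>f x\<bar>) integrable_on {a..b}"
    and "a \<le> b"
  shows "integral {a..b} (\<lambda>x. \<bar>f x\<bar>) \<le> sqrt (b - a) * sqrt (integral {a..b} (\<lambda>x. (f x)\<^sup>2))"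
proof (cases "a = b")
  case True
  then show ?thesis by simp
next
  case False
  define I F where "I = integral {a..b} (\<lambda>x. \<bar>f x\<bar>)" and "F = integral {a..b} (\<lambda>x. (f x)\<^sup>2)"
  \<comment> \<open>expand \<open>0 \<le> \<integral>(\<bar>f\<bar> - \<alpha>)\<^sup>2\<close> with \<open>\<alpha>\<close> the mean value of \<open>\<bar>f\<bar>\<close>\<close>
  define \<alpha> where "\<alpha> = I / (b - a)"
  have len: "0 < b - a"
    using \<open>a \<le> b\<close> False by simp
  have "((\<lambda>x. \<alpha>\<^sup>2) has_integral (b - a) * \<alpha>\<^sup>2) {a..b}"
    using has_integral_const_real[of "\<alpha>\<^sup>2" a b] \<open>a \<le> b\<close> by simp
  then have "((\<lambda>x. ((f x)\<^sup>2 - 2 * \<alpha> * \<bar>f x\<bar>) + \<alpha>\<^sup>2) has_integral (F - 2 * \<alpha> * I) + (b - a) * \<alpha>\<^sup>2) {a..b}"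
    unfolding I_def F_def
    by (intro has_integral_add has_integral_diff has_integral_mult_right integrable_integral f2 fa)
  moreover have "(f x)\<^sup>2 - 2 * \<alpha> * \<bar>f x\<bar> + \<alpha>\<^sup>2 = (\<bar>f x\<bar> - \<alpha>)\<^sup>2" for x
    by (simp add: power2_diff)
  ultimately have "0 \<le> (F - 2 * \<alpha> * I) + (b - a) * \<alpha>\<^sup>2"
    by (metis (no_types, lifting) has_integral_nonneg zero_le_power2)
  moreover have "(b - a) * \<alpha>\<^sup>2 = \<alpha> * I"
    using len by (simp add: \<alpha>_def power2_eq_square)
  ultimately have "I * I / (b - a) \<le> F"
    by (simp add: \<alpha>_def)
  then have "I\<^sup>2 \<le> (b - a) * F"
    using len by (simp add: pos_divide_le_eq power2_eq_square mult.commute)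
  then have "sqrt (I\<^sup>2) \<le> sqrt ((b - a) * F)"
    by (rule real_sqrt_le_mono)
  moreover have "0 \<le> I"
    unfolding I_def by (rule integral_nonneg[OF fa]) simp
  ultimately show ?thesis
    by (simp add: I_def F_def real_sqrt_mult)
qed

lemma gronwall_exp_bound:
  fixes \<phi> :: "real \<Rightarrow> real"
  assumes cont: "continuous_on {0..T} \<phi>" and "0 \<le> L"
    and le: "\<And>s. s \<in> {0..T} \<Longrightarrow> \<phi> s \<le> A + L * integral {0..s} \<phi>" and t: "t \<in> {0..T}"
  shows "\<phi> t \<le> A * exp (L * t)"
proof -
  define \<Phi> where "\<Phi> s = A + L * integral {0..s} \<phi>" for s
  \<comment> \<open>\<open>\<psi>\<close> is nonincreasing\<close>
  define \<psi> where "\<psi> s = exp (- L * s) * \<Phi> s" for s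
  have "continuous_on {0..T} (\<lambda>s. integral {0..s} \<phi>)"
    by (rule indefinite_integral_continuous_1[OF integrable_continuous_real[OF cont]])
  then have "continuous_on {0..t} \<psi>"
    unfolding \<psi>_def \<Phi>_def using t by (auto intro!: continuous_intros elim: continuous_on_subset)
  moreover have "\<exists>y. (\<psi> has_real_derivative y) (at x) \<and> y \<le> 0" if x: "0 < x" "x < t" for x
  proof -
    have "((\<lambda>s. integral {0..s} \<phi>) has_real_derivative \<phi> x) (at x)"
      using integral_has_vector_derivative[OF cont, of x] x t
      by (simp add: has_real_derivative_iff_has_vector_derivative at_within_Icc_at)
    then have "(\<Phi> has_real_derivative L * \<phi> x) (at x)"
      unfolding \<Phi>_def by (auto intro!: derivative_eq_intros)
    then have "(\<psi> has_real_derivative exp (- L * x) * (L * (\<phi> x - \<Phi> x))) (at x)"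
      unfolding \<psi>_def by (auto intro!: derivative_eq_intros simp: algebra_simps)
    moreover have "exp (- L * x) * (L * (\<phi> x - \<Phi> x)) \<le> 0"
      using le[of x] x t \<open>0 \<le> L\<close> by (simp add: \<Phi>_def mult_nonneg_nonpos)
    ultimately show ?thesis
      by blast
  qed
  ultimately have "\<psi> t \<le> \<psi> 0"
    using t by (metis DERIV_nonpos_imp_decreasing_open atLeastAtMost_iff)
  then have "\<Phi> t \<le> A * exp (L * t)"
    by (simp add: \<psi>_def \<Phi>_def exp_minus field_simps)
  then show ?thesis
    using le[OF t] by (simp add: \<Phi>_def)
qed

lemma W21_continuous_on:
  assumes "W21 f g a b"
  shows "continuous_on {a..b} f"
proof -
  have "continuous_on {a..b} (\<lambda>x. f a + integral {a..x} g)"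
    using assms unfolding W21_def
    by (intro continuous_on_add[OF continuous_on_const] indefinite_integral_continuous_1) simp
  then show ?thesis
    by (rule continuous_on_eq) (use assms in \<open>unfold W21_def, metis\<close>)
qed

lemma W21_subinterval:
  assumes W: "W21 f g a b" and c: "c \<in> {a..b}"
  shows "W21 f g c b"
proof -
  have gi: "g integrable_on {a..b}" and g2: "(\<lambda>x. (g x)\<^sup>2) integrable_on {a..b}"
    and f: "\<And>x. x \<in> {a..b} \<Longrightarrow> f x = f a + integral {a..x} g"
    using W unfolding W21_def by blast+
  have sub: "{c..b} \<subseteq> {a..b}"
    using c by auto
  have "f x = f c + integral {c..x} g" if x: "x \<in> {c..b}" for x
  proof -
    have "integral {a..c} g + integral {c..x} g = integral {a..x} g"
      by (rule Henstock_Kurzweil_Integration.integral_combine)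
        (use c x in \<open>auto intro: integrable_on_subinterval[OF gi]\<close>)
    moreover have "f x = f a + integral {a..x} g" "f c = f a + integral {a..c} g"
      using c x by (auto intro!: f)
    ultimately show ?thesis
      by linarith
  qed
  moreover have "c \<le> b"
    using c by simp
  ultimately show ?thesis
    using integrable_on_subinterval[OF gi sub] integrable_on_subinterval[OF g2 sub]
    unfolding W21_def by blast
qed

lemma square_sum3_le: "((x::real) + y + z)\<^sup>2 \<le> 3 * (x\<^sup>2 + y\<^sup>2 + z\<^sup>2)"
proof -
  have "0 \<le> (x - y)\<^sup>2 + (x - z)\<^sup>2 + (y - z)\<^sup>2"
    by simp
  then show ?thesis
    by (simp add: power2_diff power2_sum algebra_simps)
qed

lemma square_integrable_add_bounded:
  fixes g h :: "real \<Rightarrow> real"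
  assumes g: "g integrable_on {a..b}" "(\<lambda>x. (g x)\<^sup>2) integrable_on {a..b}"
    and h: "h \<in> borel_measurable (lebesgue_on {a..b})" "\<And>x. x \<in> {a..b} \<Longrightarrow> \<bar>h x\<bar> \<le> B"
  shows "(\<lambda>x. (g x + h x)\<^sup>2) integrable_on {a..b}"
proof (rule measurable_bounded_by_integrable_imp_integrable_real)
  show "(\<lambda>x. (g x + h x)\<^sup>2) \<in> borel_measurable (lebesgue_on {a..b})"
    using integrable_imp_measurable[OF g(1)] h(1) by measurable
  show "(\<lambda>x. 2 * (g x)\<^sup>2 + 2 * B\<^sup>2) integrable_on {a..b}"
    using g(2) by (intro integrable_add integrable_on_mult_right integrable_const_ivl)
  fix x assume x: "x \<in> {a..b}"
  have "(h x)\<^sup>2 \<le> B\<^sup>2"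
    using h(2)[OF x] by (metis abs_ge_zero power2_abs power_mono)
  moreover have "(g x + h x)\<^sup>2 \<le> 2 * (g x)\<^sup>2 + 2 * (h x)\<^sup>2"
    using zero_le_power2[of "g x - h x"] unfolding power2_diff power2_sum by linarith
  ultimately show "\<bar>(g x + h x)\<^sup>2\<bar> \<le> 2 * (g x)\<^sup>2 + 2 * B\<^sup>2"
    by simp
qed auto

lemma measurable_square_integrable_imp_integrable_on:
  fixes f :: "real \<Rightarrow> real"
  assumes f: "f \<in> borel_measurable (lebesgue_on {a..b})" and f2: "(\<lambda>x. (f x)\<^sup>2) integrable_on {a..b}"
  shows "f integrable_on {a..b}" "(\<lambda>x. \<bar>f x\<bar>) integrable_on {a..b}"
proof -
  have bound: "\<bar>y\<bar> \<le> 1 + y\<^sup>2" for y :: real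
  proof (cases "\<bar>y\<bar> \<le> 1")
    case False
    then have "\<bar>y\<bar> * 1 \<le> \<bar>y\<bar> * \<bar>y\<bar>"
      by (intro mult_left_mono) auto
    then show ?thesis
      by (simp add: power2_eq_square)
  qed (simp add: add_increasing2)
  have majorant: "(\<lambda>x. 1 + (f x)\<^sup>2) integrable_on {a..b}"
    using f2 by (intro integrable_add integrable_const_ivl)
  show "f integrable_on {a..b}"
    by (rule measurable_bounded_by_integrable_imp_integrable_real[OF f majorant]) (auto simp: bound)
  show "(\<lambda>x. \<bar>f x\<bar>) integrable_on {a..b}"
    using f by (intro measurable_bounded_by_integrable_imp_integrable_real[OF _ majorant])
      (auto simp: bound)
qed

lemma integral_delay_le:
  fixes \<phi> :: "real \<Rightarrow> real"
  assumes cont: "continuous_on {0..T} \<phi>" and nonneg: "\<And>s. s \<in> {0..T} \<Longrightarrow> 0 \<le> \<phi> s"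
    and "0 \<le> \<tau>" and t: "t \<in> {0..T}"
  shows "integral {0..t} (\<lambda>s. \<phi> (max 0 (s - \<tau>))) \<le> \<tau> * \<phi> 0 + integral {0..t} \<phi>"
proof -
  have int_nonneg: "0 \<le> integral {0..x} \<phi>" if "x \<in> {0..T}" for x
    by (intro integral_nonneg integrable_continuous_real continuous_on_subset[OF cont])
      (use that in \<open>auto intro: nonneg\<close>)
  show ?thesis
  proof (cases "t \<le> \<tau>")
    case True
    have "integral {0..t} (\<lambda>s. \<phi> (max 0 (s - \<tau>))) = integral {0..t} (\<lambda>s. \<phi> 0)"
      using True by (intro integral_cong) auto
    also have "\<dots> \<le> \<tau> * \<phi> 0"
      using True t nonneg[of 0] by (simp add: mult_right_mono)
    finally show ?thesis
      using int_nonneg[OF t] by linarith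
  next
    case False
    have delayed_cont: "continuous_on {0..t} (\<lambda>s. \<phi> (max 0 (s - \<tau>)))"
      by (intro continuous_on_compose2[OF cont] continuous_intros) (use t \<open>0 \<le> \<tau>\<close> in auto)
    have "integral {0..t} (\<lambda>s. \<phi> (max 0 (s - \<tau>)))
        = integral {0..\<tau>} (\<lambda>s. \<phi> (max 0 (s - \<tau>))) + integral {\<tau>..t} (\<lambda>s. \<phi> (max 0 (s - \<tau>)))"
      using False \<open>0 \<le> \<tau>\<close>
      by (intro Henstock_Kurzweil_Integration.integral_combine[symmetric] integrable_continuous_real
          delayed_cont) auto
    also have "integral {0..\<tau>} (\<lambda>s. \<phi> (max 0 (s - \<tau>))) = \<tau> * \<phi> 0"
      using \<open>0 \<le> \<tau>\<close> by (subst integral_cong[where g = "\<lambda>_. \<phi> 0"]) auto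
    also have "integral {\<tau>..t} (\<lambda>s. \<phi> (max 0 (s - \<tau>))) = integral {\<tau>..t} (\<lambda>s. \<phi> (s + - \<tau>))"
      by (intro integral_cong) auto
    also have "\<dots> = integral {0..t - \<tau>} \<phi>"
      using integral_shift_real_ivl[of 0 "- \<tau>" "t - \<tau>" \<phi>] by simp
    also have "\<dots> \<le> integral {0..t} \<phi>"
      by (intro integral_subset_le integrable_continuous_real continuous_on_subset[OF cont])
        (use t \<open>0 \<le> \<tau>\<close> in \<open>auto intro!: nonneg\<close>)
    finally show ?thesis
      by simp
  qed
qed

text \<open>A single edge \<open>[0, T]\<close>: \<open>u\<close> has weak derivative \<open>g\<close>, the delayed term \<open>w\<close> equals
  \<open>u (t - \<tau>)\<close> for \<open>t \<ge> \<tau>\<close> and is a bounded continuous history on \<open>[0, \<tau>)\<close>, and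
  \<open>f = u' + b u + c w\<close> plays the role of \<open>ell k T \<tau> b c v g j\<close>.\<close>

locale delay_edge =
  fixes u g w f :: "real \<Rightarrow> real" and T \<tau> b c P :: real
  assumes delay: "0 \<le> \<tau>" "\<tau> < T"
    and u_W21: "W21 u g 0 T"
    and history_cont: "continuous_on {0..<\<tau>} w"
    and history_bound: "\<And>t. t \<in> {0..<\<tau>} \<Longrightarrow> \<bar>w t\<bar> \<le> P"
    and P_nonneg: "0 \<le> P"
    and delayed_eq: "\<And>t. t \<in> {\<tau>..T} \<Longrightarrow> w t = u (t - \<tau>)"
    and f_eq: "\<And>t. f t = g t + b * u t + c * w t"
begin

lemma u_cont: "continuous_on {0..T} u"
  using u_W21 by (rule W21_continuous_on)

lemma abs_u_cont: "continuous_on {0..T} (\<lambda>t. \<bar>u t\<bar>)"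
  using u_cont by (rule continuous_on_rabs)

lemma g_integrable: "g integrable_on {0..T}" "(\<lambda>t. (g t)\<^sup>2) integrable_on {0..T}"
  using u_W21 unfolding W21_def by blast+

lemma u_eq: "t \<in> {0..T} \<Longrightarrow> u t = u 0 + integral {0..t} g"
  using u_W21 unfolding W21_def by blast

lemma u_bounded:
  obtains B where "\<And>t. t \<in> {0..T} \<Longrightarrow> \<bar>u t\<bar> \<le> B"
  using compact_imp_bounded[OF compact_continuous_image[OF u_cont compact_Icc]]
  unfolding bounded_iff by (metis image_eqI real_norm_def)

lemma abs_w_le: "t \<in> {0..T} \<Longrightarrow> \<bar>w t\<bar> \<le> P + \<bar>u (max 0 (t - \<tau>))\<bar>"
  using history_bound[of t] delayed_eq[of t] P_nonneg by (cases "t < \<tau>") auto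

lemma w_measurable: "w \<in> borel_measurable (lebesgue_on {0..T})"
proof -
  \<comment> \<open>a continuous extension of \<open>u\<close> to the whole line, so that \<open>w\<close> is piecewise continuous\<close>
  define U where "U s = u (max 0 (min T s))" for s
  have "continuous_on UNIV U"
    unfolding U_def
    by (rule continuous_on_compose2[OF u_cont]) (use delay in \<open>auto intro!: continuous_intros\<close>)
  then have U_delayed: "continuous_on (- {0..<\<tau>}) (\<lambda>t. U (t - \<tau>))"
    by (rule continuous_on_compose2) (auto intro!: continuous_intros)
  have "(\<lambda>t. if t \<in> {0..<\<tau>} then w t else U (t - \<tau>)) \<in> borel_measurable borel"
    by (rule borel_measurable_continuous_on_if[OF _ history_cont U_delayed]) simp
  then have "(\<lambda>t. if t \<in> {0..<\<tau>} then w t else U (t - \<tau>)) \<in> borel_measurable (lebesgue_on {0..T})"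
    by (simp add: measurable_completion measurable_restrict_space1)
  moreover have "(if t \<in> {0..<\<tau>} then w t else U (t - \<tau>)) = w t" if "t \<in> {0..T}" for t
    using that delayed_eq[of t] delay by (auto simp: U_def)
  ultimately show ?thesis
    using measurable_lebesgue_cong[of "{0..T}" "\<lambda>t. if t \<in> {0..<\<tau>} then w t else U (t - \<tau>)" w]
    by simp
qed

lemma f_integrable:
  "(\<lambda>t. (f t)\<^sup>2) integrable_on {0..T}" "f integrable_on {0..T}" "(\<lambda>t. \<bar>f t\<bar>) integrable_on {0..T}"
proof -
  obtain B where B: "\<And>t. t \<in> {0..T} \<Longrightarrow> \<bar>u t\<bar> \<le> B"
    using u_bounded by blast
  have u_meas: "u \<in> borel_measurable (lebesgue_on {0..T})"
    by (rule continuous_imp_measurable_on_sets_lebesgue[OF u_cont]) simp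
  have h_meas: "(\<lambda>t. b * u t + c * w t) \<in> borel_measurable (lebesgue_on {0..T})"
    using u_meas w_measurable by measurable
  have h_bound: "\<bar>b * u t + c * w t\<bar> \<le> \<bar>b\<bar> * B + \<bar>c\<bar> * (P + B)" if t: "t \<in> {0..T}" for t
  proof -
    have "\<bar>w t\<bar> \<le> P + B"
      using abs_w_le[OF t] B[of "max 0 (t - \<tau>)"] t delay by auto
    then show ?thesis
      using B[OF t] abs_triangle_ineq[of "b * u t" "c * w t"]
      by (simp add: abs_mult) (smt (verit) abs_ge_zero mult_left_mono)
  qed
  have f: "f = (\<lambda>t. g t + (b * u t + c * w t))"
    by (rule ext) (simp add: f_eq)
  have "(\<lambda>t. (f t)\<^sup>2) integrable_on {0..T}"
    unfolding f by (rule square_integrable_add_bounded[OF g_integrable h_meas h_bound])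
  moreover have "f \<in> borel_measurable (lebesgue_on {0..T})"
    unfolding f using integrable_imp_measurable[OF g_integrable(1)] h_meas by measurable
  ultimately show "(\<lambda>t. (f t)\<^sup>2) integrable_on {0..T}" "f integrable_on {0..T}"
    "(\<lambda>t. \<bar>f t\<bar>) integrable_on {0..T}"
    using measurable_square_integrable_imp_integrable_on by blast+
qed

lemma abs_u_le_integral:
  assumes t: "t \<in> {0..T}"
  shows "\<bar>u t\<bar> \<le> (\<bar>u 0\<bar> * (1 + \<bar>c\<bar> * T) + \<bar>c\<bar> * T * P + integral {0..T} (\<lambda>s. \<bar>f s\<bar>))
    + (\<bar>b\<bar> + \<bar>c\<bar>) * integral {0..t} (\<lambda>s. \<bar>u s\<bar>)"
proof -
  have sub: "{0..t} \<subseteq> {0..T}"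
    using t by auto
  define V where "V s = \<bar>u (max 0 (s - \<tau>))\<bar>" for s
  define F U W where "F = integral {0..t} (\<lambda>s. \<bar>f s\<bar>)" and "U = integral {0..t} (\<lambda>s. \<bar>u s\<bar>)"
    and "W = integral {0..t} V"
  have fi: "(\<lambda>s. \<bar>f s\<bar>) integrable_on {0..t}"
    by (rule integrable_on_subinterval[OF f_integrable(3) sub])
  have ui: "(\<lambda>s. \<bar>u s\<bar>) integrable_on {0..t}"
    by (rule integrable_continuous_real[OF continuous_on_subset[OF abs_u_cont sub]])
  have Vi: "V integrable_on {0..t}"
    unfolding V_def
    by (intro integrable_continuous_real continuous_on_compose2[OF abs_u_cont] continuous_intros)
      (use t delay in auto)
  have const: "((\<lambda>s. P) has_integral t * P) {0..t}"
    using has_integral_const_real[of P 0 t] t by simp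
  have majorant: "((\<lambda>s. \<bar>f s\<bar> + \<bar>b\<bar> * \<bar>u s\<bar> + \<bar>c\<bar> * (P + V s)) has_integral
      F + \<bar>b\<bar> * U + \<bar>c\<bar> * (t * P + W)) {0..t}"
    unfolding F_def U_def W_def
    by (intro has_integral_add has_integral_mult_right integrable_integral fi ui Vi const)
  have "norm (integral {0..t} g) \<le> integral {0..t} (\<lambda>s. \<bar>f s\<bar> + \<bar>b\<bar> * \<bar>u s\<bar> + \<bar>c\<bar> * (P + V s))"
  proof (rule integral_norm_bound_integral)
    show "g integrable_on {0..t}"
      by (rule integrable_on_subinterval[OF g_integrable(1) sub])
    show "(\<lambda>s. \<bar>f s\<bar> + \<bar>b\<bar> * \<bar>u s\<bar> + \<bar>c\<bar> * (P + V s)) integrable_on {0..t}"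
      using majorant by blast
  next
    fix s assume s: "s \<in> {0..t}"
    have "\<bar>c\<bar> * \<bar>w s\<bar> \<le> \<bar>c\<bar> * (P + V s)"
      using abs_w_le[of s] s sub unfolding V_def by (intro mult_left_mono) auto
    then show "norm (g s) \<le> \<bar>f s\<bar> + \<bar>b\<bar> * \<bar>u s\<bar> + \<bar>c\<bar> * (P + V s)"
      using f_eq[of s] abs_mult[of b "u s"] abs_mult[of c "w s"] by simp linarith
  qed
  also have "\<dots> = F + \<bar>b\<bar> * U + \<bar>c\<bar> * (t * P + W)"
    using majorant by (rule integral_unique)
  finally have g_bound: "\<bar>integral {0..t} g\<bar> \<le> F + \<bar>b\<bar> * U + \<bar>c\<bar> * (t * P + W)"
    by simp
  have "F \<le> integral {0..T} (\<lambda>s. \<bar>f s\<bar>)"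
    unfolding F_def by (rule integral_subset_le[OF sub fi f_integrable(3)]) simp
  moreover have "\<bar>c\<bar> * (t * P + W) \<le> \<bar>c\<bar> * (T * P + T * \<bar>u 0\<bar> + U)"
  proof (rule mult_left_mono)
    have "W \<le> \<tau> * \<bar>u 0\<bar> + U"
      unfolding W_def V_def U_def by (rule integral_delay_le[OF abs_u_cont _ delay(1) t]) simp
    moreover have "t * P \<le> T * P" "\<tau> * \<bar>u 0\<bar> \<le> T * \<bar>u 0\<bar>"
      using t delay P_nonneg by (auto intro: mult_right_mono)
    ultimately show "t * P + W \<le> T * P + T * \<bar>u 0\<bar> + U"
      by linarith
  qed simp
  moreover have "\<bar>u t\<bar> \<le> \<bar>u 0\<bar> + \<bar>integral {0..t} g\<bar>"
    using u_eq[OF t] by simp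
  ultimately have "\<bar>u t\<bar> \<le> \<bar>u 0\<bar> + integral {0..T} (\<lambda>s. \<bar>f s\<bar>) + \<bar>b\<bar> * U
      + \<bar>c\<bar> * (T * P + T * \<bar>u 0\<bar> + U)"
    using g_bound by linarith
  then show ?thesis
    unfolding U_def by (simp add: algebra_simps)
qed

lemma sup_bound:
  assumes t: "t \<in> {0..T}"
  shows "\<bar>u t\<bar> \<le> exp ((\<bar>b\<bar> + \<bar>c\<bar>) * T) *
    (\<bar>u 0\<bar> * (1 + \<bar>c\<bar> * T) + \<bar>c\<bar> * T * P + sqrt T * sqrt (integral {0..T} (\<lambda>s. (f s)\<^sup>2)))"
proof -
  define A where "A = \<bar>u 0\<bar> * (1 + \<bar>c\<bar> * T) + \<bar>c\<bar> * T * P + integral {0..T} (\<lambda>s. \<bar>f s\<bar>)"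
  have "0 \<le> integral {0..T} (\<lambda>s. \<bar>f s\<bar>)"
    by (rule integral_nonneg[OF f_integrable(3)]) simp
  then have A_nonneg: "0 \<le> A"
    unfolding A_def using delay P_nonneg by simp
  have "\<bar>u t\<bar> \<le> A * exp ((\<bar>b\<bar> + \<bar>c\<bar>) * t)"
    unfolding A_def by (rule gronwall_exp_bound[OF abs_u_cont _ abs_u_le_integral t]) simp
  also have "\<dots> \<le> A * exp ((\<bar>b\<bar> + \<bar>c\<bar>) * T)"
    using A_nonneg t by (auto intro!: mult_left_mono)
  also have "\<dots> \<le> exp ((\<bar>b\<bar> + \<bar>c\<bar>) * T) *
      (\<bar>u 0\<bar> * (1 + \<bar>c\<bar> * T) + \<bar>c\<bar> * T * P + sqrt T * sqrt (integral {0..T} (\<lambda>s. (f s)\<^sup>2)))"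
    using integral_abs_le_sqrt_integral_square[OF f_integrable(1) f_integrable(3)] delay
    by (simp add: A_def mult.commute)
  finally show ?thesis .
qed

lemma energy_bound:
  assumes M: "\<And>t. t \<in> {0..T} \<Longrightarrow> \<bar>u t\<bar> \<le> M"
  shows "integral {0..T} (\<lambda>t. (u t)\<^sup>2 + (g t)\<^sup>2)
    \<le> 3 * integral {0..T} (\<lambda>t. (f t)\<^sup>2) + T * ((1 + 3 * b\<^sup>2) * M\<^sup>2 + 3 * c\<^sup>2 * (M + P)\<^sup>2)"
proof -
  define K where "K = (1 + 3 * b\<^sup>2) * M\<^sup>2 + 3 * c\<^sup>2 * (M + P)\<^sup>2"
  have pointwise: "(u t)\<^sup>2 + (g t)\<^sup>2 \<le> 3 * (f t)\<^sup>2 + K" if t: "t \<in> {0..T}" for t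
  proof -
    have "0 \<le> M"
      using M[OF t] by linarith
    have u2: "(u t)\<^sup>2 \<le> M\<^sup>2"
      using M[OF t] \<open>0 \<le> M\<close> by (simp add: power2_le_iff_abs_le)
    have "\<bar>w t\<bar> \<le> M + P"
      using abs_w_le[OF t] M[of "max 0 (t - \<tau>)"] t delay by auto
    then have w2: "(w t)\<^sup>2 \<le> (M + P)\<^sup>2"
      using \<open>0 \<le> M\<close> P_nonneg by (simp add: power2_le_iff_abs_le)
    have "(g t)\<^sup>2 = (f t + (- b * u t) + (- c * w t))\<^sup>2"
      by (simp add: f_eq)
    also have "\<dots> \<le> 3 * ((f t)\<^sup>2 + b\<^sup>2 * (u t)\<^sup>2 + c\<^sup>2 * (w t)\<^sup>2)"
      using square_sum3_le[of "f t" "- b * u t" "- c * w t"] by (simp add: power_mult_distrib)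
    also have "\<dots> \<le> 3 * ((f t)\<^sup>2 + b\<^sup>2 * M\<^sup>2 + c\<^sup>2 * (M + P)\<^sup>2)"
      using mult_left_mono[OF u2, of "b\<^sup>2"] mult_left_mono[OF w2, of "c\<^sup>2"] by simp
    finally show ?thesis
      using u2 unfolding K_def by (simp add: algebra_simps)
  qed
  have "integral {0..T} (\<lambda>t. (u t)\<^sup>2 + (g t)\<^sup>2) \<le> integral {0..T} (\<lambda>t. 3 * (f t)\<^sup>2 + K)"
  proof (rule integral_le)
    show "(\<lambda>t. (u t)\<^sup>2 + (g t)\<^sup>2) integrable_on {0..T}"
      by (rule integrable_add[OF integrable_continuous_real g_integrable(2)])
        (intro continuous_intros u_cont)
    show "(\<lambda>t. 3 * (f t)\<^sup>2 + K) integrable_on {0..T}"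
      by (intro integrable_add integrable_on_mult_right f_integrable(1) integrable_const_ivl)
  qed (rule pointwise)
  also have "\<dots> = 3 * integral {0..T} (\<lambda>t. (f t)\<^sup>2) + T * K"
    using integral_add[OF integrable_on_mult_right[OF f_integrable(1), of 3]
        integrable_const_ivl[of K 0 T]] delay
    by simp
  finally show ?thesis
    unfolding K_def .
qed

end

locale rooted_tree_problem =
  fixes m d :: nat and k :: "nat \<Rightarrow> nat" and T b c :: "nat \<Rightarrow> real" and \<tau> :: real
  assumes tree: "rooted_tree m d k"
    and tau_nonneg: "0 \<le> \<tau>" and tau_less: "\<And>j. j \<in> {1..m} \<Longrightarrow> \<tau> < T j"
begin

abbreviation cost :: "(nat \<Rightarrow> real \<Rightarrow> real) \<Rightarrow> (nat \<Rightarrow> real \<Rightarrow> real) \<Rightarrow> real" where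
  "cost v g \<equiv> JJ m k T \<tau> b c v g"

lemma edge_length_pos: "j \<in> {1..m} \<Longrightarrow> 0 < T j"
  using tau_nonneg tau_less[of j] by linarith

lemma parent_mem:
  assumes "j \<in> {1..m}" and "j \<noteq> 1"
  shows "k j \<in> {1..m}"
proof -
  have "j \<in> {2..m}"
    using assms by auto
  then have "k j \<in> {1..d}" and "d < m"
    using tree unfolding rooted_tree_def by blast+
  then show ?thesis
    by auto
qed

lemma cost_nonneg: "0 \<le> cost v g"
  unfolding JJ_def by (rule sum_nonneg) (rule integral_square_nonneg)

lemma integral_ell_square_le_cost:
  "j \<in> {1..m} \<Longrightarrow> integral {0..T j} (\<lambda>t. (ell k T \<tau> b c v g j t)\<^sup>2) \<le> cost v g"
  unfolding JJ_def by (rule member_le_sum) (simp_all add: integral_square_nonneg)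

lemma inW_W21:
  assumes W: "inW m d k T \<tau> v g" and j: "j \<in> {1..m}"
  shows "W21 (v j) (g j) 0 (T j)"
proof (cases "j = 1")
  case True
  have "W21 (v 1) (g 1) (- \<tau>) (T 1)"
    using W unfolding inW_def by blast
  moreover have "0 \<in> {- \<tau>..T 1}"
    using tau_nonneg edge_length_pos[of 1] True j by simp
  ultimately show ?thesis
    using True by (simp add: W21_subinterval)
next
  case False
  then have "j \<in> {2..m}"
    using j by simp
  then show ?thesis
    using W unfolding inW_def by blast
qed

lemma inW_delay_edge:
  assumes W: "inW m d k T \<tau> v g" and j: "j \<in> {1..m}" and "0 \<le> P"
    and parent: "j \<noteq> 1 \<Longrightarrow> \<forall>s\<in>{0..T (k j)}. \<bar>v (k j) s\<bar> \<le> P"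
  shows "delay_edge (v j) (g j) (delayed k T \<tau> v j) (ell k T \<tau> b c v g j) (T j) \<tau> (b j) (c j) P"
proof -
  have history: "continuous_on {0..<\<tau>} (delayed k T \<tau> v j)
      \<and> (\<forall>t\<in>{0..<\<tau>}. \<bar>delayed k T \<tau> v j t\<bar> \<le> P)"
  proof (cases "j = 1")
    case True
    have "\<forall>t\<in>{-\<tau>..0}. v 1 t = 0"
      using W unfolding inW_def by blast
    then have zero: "delayed k T \<tau> v j t = 0" if "t \<in> {0..<\<tau>}" for t
      using that True by (simp add: delayed_def)
    have "continuous_on {0..<\<tau>} (delayed k T \<tau> v j)"
      by (rule continuous_on_eq[OF continuous_on_const]) (simp add: zero)
    then show ?thesis
      using zero \<open>0 \<le> P\<close> by simp
  next
    case False
    have p: "k j \<in> {1..m}"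
      by (rule parent_mem[OF j False])
    have delayed_eq: "delayed k T \<tau> v j t = v (k j) (t - \<tau> + T (k j))" if "t \<in> {0..<\<tau>}" for t
      using that False by (simp add: delayed_def)
    have shift: "t - \<tau> + T (k j) \<in> {0..T (k j)}" if "t \<in> {0..<\<tau>}" for t
      using that tau_less[OF p] by auto
    have "continuous_on {0..<\<tau>} (\<lambda>t. v (k j) (t - \<tau> + T (k j)))"
      by (rule continuous_on_compose2[OF W21_continuous_on[OF inW_W21[OF W p]]])
        (use shift in \<open>auto intro!: continuous_intros\<close>)
    then have "continuous_on {0..<\<tau>} (delayed k T \<tau> v j)"
      by (rule continuous_on_eq) (simp add: delayed_eq)
    then show ?thesis
      using delayed_eq parent[OF False] shift by simp
  qed
  show ?thesis
  proof
    show "0 \<le> \<tau>" "\<tau> < T j"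
      using tau_nonneg tau_less[OF j] by simp_all
    show "W21 (v j) (g j) 0 (T j)"
      by (rule inW_W21[OF W j])
    show "continuous_on {0..<\<tau>} (delayed k T \<tau> v j)"
      "\<And>t. t \<in> {0..<\<tau>} \<Longrightarrow> \<bar>delayed k T \<tau> v j t\<bar> \<le> P"
      using history by simp_all
    show "0 \<le> P"
      by fact
    show "\<And>t. t \<in> {\<tau>..T j} \<Longrightarrow> delayed k T \<tau> v j t = v j (t - \<tau>)"
      by (simp add: delayed_def)
    show "\<And>t. ell k T \<tau> b c v g j t = g j t + b j * v j t + c j * delayed k T \<tau> v j t"
      by (simp add: ell_def)
  qed
qed

lemma sup_bound_from_parent:
  assumes W: "inW m d k T \<tau> v g" and j: "j \<in> {1..m}" and "0 \<le> K"
    and parent: "j \<noteq> 1 \<Longrightarrow> \<forall>s\<in>{0..T (k j)}. \<bar>v (k j) s\<bar> \<le> K * sqrt (cost v g)"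
    and t: "t \<in> {0..T j}"
  shows "\<bar>v j t\<bar> \<le> exp ((\<bar>b j\<bar> + \<bar>c j\<bar>) * T j) * (K * (1 + 2 * \<bar>c j\<bar> * T j) + sqrt (T j))
    * sqrt (cost v g)"
proof -
  define S where "S = sqrt (cost v g)"
  have "0 \<le> S"
    unfolding S_def using cost_nonneg by simp
  interpret delay_edge "v j" "g j" "delayed k T \<tau> v j" "ell k T \<tau> b c v g j" "T j" \<tau>
      "b j" "c j" "K * S"
    by (rule inW_delay_edge[OF W j]) (use \<open>0 \<le> K\<close> \<open>0 \<le> S\<close> parent in \<open>simp_all add: S_def\<close>)
  have start: "\<bar>v j 0\<bar> \<le> K * S"
  proof (cases "j = 1")
    case True
    have "\<forall>t\<in>{-\<tau>..0}. v 1 t = 0"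
      using W unfolding inW_def by blast
    then show ?thesis
      using True tau_nonneg \<open>0 \<le> K\<close> \<open>0 \<le> S\<close> by simp
  next
    case False
    have "j \<in> {2..m}"
      using j False by simp
    then have "v j 0 = v (k j) (T (k j))"
      using W unfolding inW_def by blast
    moreover have "T (k j) \<in> {0..T (k j)}"
      using edge_length_pos[OF parent_mem[OF j False]] by simp
    ultimately show ?thesis
      using parent[OF False] by (simp add: S_def)
  qed
  have ell_le: "sqrt (integral {0..T j} (\<lambda>s. (ell k T \<tau> b c v g j s)\<^sup>2)) \<le> S"
    unfolding S_def using integral_ell_square_le_cost[OF j] by simp
  have "\<bar>v j t\<bar> \<le> exp ((\<bar>b j\<bar> + \<bar>c j\<bar>) * T j) * (\<bar>v j 0\<bar> * (1 + \<bar>c j\<bar> * T j) + \<bar>c j\<bar> * T j * (K * S)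
      + sqrt (T j) * sqrt (integral {0..T j} (\<lambda>s. (ell k T \<tau> b c v g j s)\<^sup>2)))"
    by (rule sup_bound[OF t])
  also have "\<dots> \<le> exp ((\<bar>b j\<bar> + \<bar>c j\<bar>) * T j) * (K * S * (1 + \<bar>c j\<bar> * T j) + \<bar>c j\<bar> * T j * (K * S)
      + sqrt (T j) * S)"
  proof (rule mult_left_mono)
    have "\<bar>v j 0\<bar> * (1 + \<bar>c j\<bar> * T j) \<le> K * S * (1 + \<bar>c j\<bar> * T j)"
      by (rule mult_right_mono[OF start]) (use edge_length_pos[OF j] in auto)
    moreover have "sqrt (T j) * sqrt (integral {0..T j} (\<lambda>s. (ell k T \<tau> b c v g j s)\<^sup>2)) \<le> sqrt (T j) * S"
      by (rule mult_left_mono[OF ell_le]) (use edge_length_pos[OF j] in auto)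
    ultimately show "\<bar>v j 0\<bar> * (1 + \<bar>c j\<bar> * T j) + \<bar>c j\<bar> * T j * (K * S)
        + sqrt (T j) * sqrt (integral {0..T j} (\<lambda>s. (ell k T \<tau> b c v g j s)\<^sup>2))
      \<le> K * S * (1 + \<bar>c j\<bar> * T j) + \<bar>c j\<bar> * T j * (K * S) + sqrt (T j) * S"
      by linarith
  qed simp
  also have "\<dots> = exp ((\<bar>b j\<bar> + \<bar>c j\<bar>) * T j) * (K * (1 + 2 * \<bar>c j\<bar> * T j) + sqrt (T j)) * S"
    by (simp add: algebra_simps)
  finally show ?thesis
    unfolding S_def .
qed

lemma edge_sup_bound:
  assumes "j \<in> {1..m}"
  shows "\<exists>K\<ge>0. \<forall>v g. inW m d k T \<tau> v g \<longrightarrow> (\<forall>t\<in>{0..T j}. \<bar>v j t\<bar> \<le> K * sqrt (cost v g))"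
proof -
  obtain n where "(k ^^ n) j = 0"
    using tree assms unfolding rooted_tree_def by blast
  then show ?thesis
    using assms
  proof (induction n arbitrary: j)
    case 0
    then show ?case by simp
  next
    case (Suc n)
    obtain K where K: "0 \<le> K" and parent: "j \<noteq> 1 \<Longrightarrow> \<forall>v g. inW m d k T \<tau> v g \<longrightarrow>
        (\<forall>s\<in>{0..T (k j)}. \<bar>v (k j) s\<bar> \<le> K * sqrt (cost v g))"
    proof (cases "j = 1")
      case True
      \<comment> \<open>the root edge has zero history, so any \<open>K\<close> serves as a parent bound\<close>
      then show ?thesis
        using that[of 0] by simp
    next
      case False
      have "(k ^^ n) (k j) = 0"
        using Suc.prems(1) by (simp only: funpow_Suc_right comp_apply)
      then show ?thesis
        using Suc.IH parent_mem[OF Suc.prems(2) False] that by blast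
    qed
    show ?case
      by (intro exI[of _ "exp ((\<bar>b j\<bar> + \<bar>c j\<bar>) * T j) * (K * (1 + 2 * \<bar>c j\<bar> * T j) + sqrt (T j))"]
          conjI allI impI ballI sup_bound_from_parent[OF _ Suc.prems(2) K])
        (use parent edge_length_pos[OF Suc.prems(2)] K in auto)
  qed
qed

lemma uniform_sup_bound:
  "\<exists>K\<ge>0. \<forall>v g. inW m d k T \<tau> v g \<longrightarrow>
    (\<forall>j\<in>{1..m}. \<forall>t\<in>{0..T j}. \<bar>v j t\<bar> \<le> K * sqrt (cost v g))"
proof -
  have "\<forall>j\<in>{1..m}. \<exists>K\<ge>0. \<forall>v g. inW m d k T \<tau> v g \<longrightarrow> (\<forall>t\<in>{0..T j}. \<bar>v j t\<bar> \<le> K * sqrt (cost v g))"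
    using edge_sup_bound by blast
  then obtain K where K: "\<forall>j\<in>{1..m}. 0 \<le> K j \<and>
      (\<forall>v g. inW m d k T \<tau> v g \<longrightarrow> (\<forall>t\<in>{0..T j}. \<bar>v j t\<bar> \<le> K j * sqrt (cost v g)))"
    by (metis (no_types, lifting) bchoice)
  show ?thesis
  proof (intro exI[of _ "\<Sum>j=1..m. K j"] conjI allI impI ballI)
    show "0 \<le> (\<Sum>j=1..m. K j)"
      using K by (auto intro: sum_nonneg)
    fix v g j t
    assume W: "inW m d k T \<tau> v g" and j: "j \<in> {1..m}" and t: "t \<in> {0..T j}"
    have "K j \<le> (\<Sum>j=1..m. K j)"
      using K j by (intro member_le_sum) auto
    then have "K j * sqrt (cost v g) \<le> (\<Sum>j=1..m. K j) * sqrt (cost v g)"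
      by (rule mult_right_mono) (simp add: cost_nonneg)
    moreover have "\<bar>v j t\<bar> \<le> K j * sqrt (cost v g)"
      using K W j t by blast
    ultimately show "\<bar>v j t\<bar> \<le> (\<Sum>j=1..m. K j) * sqrt (cost v g)"
      by linarith
  qed
qed

lemma norm_le_cost: "\<exists>D>0. \<forall>v g. inW m d k T \<tau> v g \<longrightarrow> W21T_norm2 m T v g \<le> D * cost v g"
proof -
  obtain K where "0 \<le> K" and K: "\<And>v g j t. inW m d k T \<tau> v g \<Longrightarrow> j \<in> {1..m} \<Longrightarrow> t \<in> {0..T j}
      \<Longrightarrow> \<bar>v j t\<bar> \<le> K * sqrt (cost v g)"
    using uniform_sup_bound by blast
  define Q where "Q j = (1 + 3 * (b j)\<^sup>2) * K\<^sup>2 + 12 * (c j)\<^sup>2 * K\<^sup>2" for j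
  define D where "D = 3 + (\<Sum>j=1..m. T j * Q j)"
  have "0 \<le> (\<Sum>j=1..m. T j * Q j)"
    using edge_length_pos unfolding Q_def by (intro sum_nonneg mult_nonneg_nonneg) (auto intro: less_imp_le)
  then have "0 < D"
    unfolding D_def by simp
  moreover have "W21T_norm2 m T v g \<le> D * cost v g" if W: "inW m d k T \<tau> v g" for v g
  proof -
    define S where "S = sqrt (cost v g)"
    have "0 \<le> S"
      unfolding S_def using cost_nonneg by simp
    have S2: "S\<^sup>2 = cost v g"
      unfolding S_def using cost_nonneg by simp
    have edge: "integral {0..T j} (\<lambda>t. (v j t)\<^sup>2 + (g j t)\<^sup>2)
        \<le> 3 * integral {0..T j} (\<lambda>t. (ell k T \<tau> b c v g j t)\<^sup>2) + T j * Q j * cost v g"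
      if j: "j \<in> {1..m}" for j
    proof -
      interpret delay_edge "v j" "g j" "delayed k T \<tau> v j" "ell k T \<tau> b c v g j" "T j" \<tau>
          "b j" "c j" "K * S"
        by (rule inW_delay_edge[OF W j])
          (use K[OF W] parent_mem[OF j] \<open>0 \<le> K\<close> \<open>0 \<le> S\<close> in \<open>auto simp: S_def\<close>)
      have "integral {0..T j} (\<lambda>t. (v j t)\<^sup>2 + (g j t)\<^sup>2)
          \<le> 3 * integral {0..T j} (\<lambda>t. (ell k T \<tau> b c v g j t)\<^sup>2)
            + T j * ((1 + 3 * (b j)\<^sup>2) * (K * S)\<^sup>2 + 3 * (c j)\<^sup>2 * (K * S + K * S)\<^sup>2)"
        by (rule energy_bound) (use K[OF W j] in \<open>simp add: S_def\<close>)
      also have "(1 + 3 * (b j)\<^sup>2) * (K * S)\<^sup>2 + 3 * (c j)\<^sup>2 * (K * S + K * S)\<^sup>2 = Q j * S\<^sup>2"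
        unfolding Q_def by (simp add: power2_eq_square algebra_simps)
      finally show ?thesis
        unfolding S2 by (simp add: mult.assoc)
    qed
    have "W21T_norm2 m T v g
        \<le> (\<Sum>j=1..m. 3 * integral {0..T j} (\<lambda>t. (ell k T \<tau> b c v g j t)\<^sup>2) + T j * Q j * cost v g)"
      unfolding W21T_norm2_def by (rule sum_mono) (rule edge)
    also have "\<dots> = 3 * (\<Sum>j=1..m. integral {0..T j} (\<lambda>t. (ell k T \<tau> b c v g j t)\<^sup>2))
        + (\<Sum>j=1..m. T j * Q j) * cost v g"
      by (simp add: sum.distrib sum_distrib_left sum_distrib_right)
    also have "\<dots> = D * cost v g"
      unfolding D_def JJ_def by (simp add: distrib_right)
    finally show ?thesis .
  qed
  ultimately show ?thesis
    by blast
qed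

end

theorem lemma6:
  fixes m d :: nat and k :: "nat \<Rightarrow> nat" and T b c :: "nat \<Rightarrow> real" and \<tau> :: real
  assumes tree: "rooted_tree m d k"
    and tau: "0 \<le> \<tau>" "\<forall>j\<in>{1..m}. \<tau> < T j"
  shows "\<exists>C1>0. \<forall>v g. inW m d k T \<tau> v g \<longrightarrow>
           JJ m k T \<tau> b c v g \<ge> C1 * W21T_norm2 m T v g"
proof -
  interpret rooted_tree_problem m d k T b c \<tau>
    using assms by unfold_locales auto
  obtain D where "0 < D"
    and D: "\<And>v g. inW m d k T \<tau> v g \<Longrightarrow> W21T_norm2 m T v g \<le> D * JJ m k T \<tau> b c v g"
    using norm_le_cost by blast
  show ?thesis
  proof (intro exI[of _ "1 / D"] conjI allI impI)
    show "0 < 1 / D"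
      using \<open>0 < D\<close> by simp
    fix v g
    assume "inW m d k T \<tau> v g"
    then show "1 / D * W21T_norm2 m T v g \<le> JJ m k T \<tau> b c v g"
      using D[of v g] \<open>0 < D\<close> by (simp add: field_simps)
  qed
qed

end
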